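(* Let $0<a,b<1$ and integers $1\le f<N$, and consider the two-strata persistent gambler's ruin process of the context. For integers $0\le m<n<N$ let $\rho_{m,n}$ and $\rho_{n,m}$ be the one-sided first passage probabilities defined in the context. Then: (I.1) for $\ell\ge1$, $j\ge0$ with $f-\ell\ge0$ and $f+j<N$: $\rho_{f-\ell,f+j}=\dfrac{b/(2a)}{\,j+\ell\frac ba-(\ell+j-1)b\,}$; (I.2) for the same $\ell,j$: $\rho_{f+j,f-\ell}=\dfrac{1/2}{\,(j+1)+(\ell-1)\frac ba-(\ell+j-1)b\,}$; (II.1) for $0\le m<m+\ell\le f-1$: $\rho_{m,m+\ell}=\rho_{m+\ell,m}=\dfrac{1}{2(\ell-(\ell-1)a)}$; (II.2) for $f\le m<m+j<N$: $\rho_{m,m+j}=\rho_{m+j,m}=\dfrac{1}{2(j-(j-1)b)}$.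
   Context: The process $(\mathbf X_j)_{j\ge0}$ on $\mathbb Z\cap[-N,N]$ has increments $\varepsilon_j=\mathbf X_j-\mathbf X_{j-1}\in\{\pm1\}$ with $P(\varepsilon_1=1)=P(\varepsilon_1=-1)=\frac12$ and for $j\ge1$, $P(\varepsilon_{j+1}=1\mid\varepsilon_j=1,|\mathbf X_j|=k)=P(\varepsilon_{j+1}=-1\mid\varepsilon_j=-1,|\mathbf X_j|=k)=a_k$ (reversal with probability $1-a_k$), with $a_k=a$ for $0\le k\le f-1$ and $a_k=b$ for $f\le k<N$; it stops when $|\mathbf X_j|=N$. For $m\neq n$ in $(-N,N)$ and the process started at $\mathbf X_0=m$, let $\mathbf L_{m,n}:=\inf\{j\ge1:\mathbf X_j=n\text{ or }|\mathbf X_j|=N\}$. For $m<n$ define $\rho_{m,n}:=P(\mathbf X_j\ge m,\ j=0,\dots,\mathbf L_{m,n}\mid\mathbf X_0=m)$ and $\rho_{n,m}:=P(\mathbf X_j\le n,\ j=0,\dots,\mathbf L_{n,m}\mid\mathbf X_0=n)$. *)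

theory Defs
  imports Complex_Main
begin

definition pgr_a :: "real \<Rightarrow> real \<Rightarrow> int \<Rightarrow> int \<Rightarrow> real" where
  "pgr_a a b f k = (if k < f then a else b)"

definition pgr_pos :: "int \<Rightarrow> int list \<Rightarrow> nat \<Rightarrow> int" where
  "pgr_pos m es j = m + sum_list (take j es)"

text \<open>Probability that the first length(es) increments equal es
  (eps_1 = +-1 with prob 1/2; eps_(i+1) = eps_i with prob a_|X_i|, else reversal).\<close>
definition pgr_path_prob :: "real \<Rightarrow> real \<Rightarrow> int \<Rightarrow> int \<Rightarrow> int list \<Rightarrow> real" where
  "pgr_path_prob a b f m es = (if es = [] then 1 else
     (1/2) * (\<Prod>i\<in>{1..<length es}.
        (let p = pgr_a a b f \<bar>pgr_pos m es i\<bar> in if es ! i = es ! (i - 1) then p else 1 - p)))"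

definition pgr_event :: "int \<Rightarrow> int \<Rightarrow> int \<Rightarrow> int list \<Rightarrow> bool" where
  "pgr_event N m n es = (let k = length es; X = pgr_pos m es in
     1 \<le> k \<and> (X k = n \<or> \<bar>X k\<bar> = N) \<and> (\<forall>j\<in>{1..<k}. X j \<noteq> n \<and> \<bar>X j\<bar> < N) \<and>
     (\<forall>j\<le>k. if m < n then m \<le> X j else X j \<le> m))"

text \<open>rho_{m,n}: probability of the event, as the (countable, disjoint) sum over
  the finite increment paths realising it, grouped by L = k.\<close>
definition pgr_rho :: "real \<Rightarrow> real \<Rightarrow> int \<Rightarrow> int \<Rightarrow> int \<Rightarrow> int \<Rightarrow> real" where
  "pgr_rho a b f N m n = (\<Sum>k. \<Sum>es\<in>{es. length es = k \<and> set es \<subseteq> {-1, 1} \<and> pgr_event N m n es}.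
       pgr_path_prob a b f m es)"

end

theory Submission
  imports Defs
begin

(* Let U(x) resp. D(x) be the probability that the walk, standing at x after an up resp. down
   step, reaches n before dropping below m. One step of the process gives the two-state
   recurrence U(x) = q(x) U(x+1) + (1 - q(x)) D(x-1), D(x) = (1 - q(x)) U(x+1) + q(x) D(x-1),
   whose "flux" U(x+1) - D(x) is constant in x. With U(n) = 1 and D(m-1) = 0 this forces
   U(m+1) = 1 / (q(m) (1 + sum of (1 - q(x))/q(x) over m <= x < n)), and rho_{m,n} = U(m+1)/2
   since the first step has to go up. Downward passages reduce to upward ones under x -> -x,
   because a_k only depends on |x|. Summing the weights (1-a)/a and (1-b)/b over the two
   strata gives the closed forms. *)

section \<open>First passage of a persistent walk\<close>

definition step_prob :: "(int \<Rightarrow> real) \<Rightarrow> int \<Rightarrow> int \<Rightarrow> int \<Rightarrow> real" where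
  "step_prob q x d e = (if e = d then q x else 1 - q x)"

fun path_prob :: "(int \<Rightarrow> real) \<Rightarrow> int \<Rightarrow> int \<Rightarrow> int list \<Rightarrow> real" where
  "path_prob q x d [] = 1"
| "path_prob q x d (e # es) = step_prob q x d e * path_prob q (x + e) e es"

fun passes_up :: "int \<Rightarrow> int \<Rightarrow> int \<Rightarrow> int list \<Rightarrow> bool" where
  "passes_up lo n x [] = (x = n)"
| "passes_up lo n x (e # es) = (lo \<le> x \<and> x < n \<and> passes_up lo n (x + e) es)"

definition passage_prob_len :: "(int \<Rightarrow> real) \<Rightarrow> int \<Rightarrow> int \<Rightarrow> nat \<Rightarrow> int \<Rightarrow> int \<Rightarrow> real" where
  "passage_prob_len q lo n k x d =
     (\<Sum>es\<in>{es. length es = k \<and> set es \<subseteq> {-1, 1} \<and> passes_up lo n x es}. path_prob q x d es)"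

text \<open>\<open>passage_prob q lo n x 1\<close> and \<open>passage_prob q lo n x (-1)\<close> are the \<open>U(x)\<close> and \<open>D(x)\<close> above.\<close>

definition passage_prob :: "(int \<Rightarrow> real) \<Rightarrow> int \<Rightarrow> int \<Rightarrow> int \<Rightarrow> int \<Rightarrow> real" where
  "passage_prob q lo n x d = (\<Sum>k. passage_prob_len q lo n k x d)"

lemma finite_sign_lists: "finite {es :: int list. length es = k \<and> set es \<subseteq> {-1, 1} \<and> P es}"
  by (rule finite_subset[OF _ finite_lists_length_eq[of "{-1, 1 :: int}" k]]) auto

lemma sign_lists_Suc:
  "{es :: int list. length es = Suc k \<and> set es \<subseteq> {-1, 1} \<and> P es} =
   Cons 1 ` {es. length es = k \<and> set es \<subseteq> {-1, 1} \<and> P (1 # es)} \<union>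
   Cons (-1) ` {es. length es = k \<and> set es \<subseteq> {-1, 1} \<and> P ((-1) # es)}"
  by (auto simp: length_Suc_conv)

lemma passage_prob_len_0: "passage_prob_len q lo n 0 x d = (if x = n then 1 else 0)"
proof -
  have "{es :: int list. length es = 0 \<and> set es \<subseteq> {-1, 1} \<and> passes_up lo n x es} =
        (if x = n then {[]} else {})"
    by auto
  then show ?thesis by (simp add: passage_prob_len_def)
qed

lemma passage_prob_len_Suc:
  "passage_prob_len q lo n (Suc k) x d =
     (if lo \<le> x \<and> x < n then
        step_prob q x d 1 * passage_prob_len q lo n k (x + 1) 1
      + step_prob q x d (-1) * passage_prob_len q lo n k (x - 1) (-1)
      else 0)"
proof (cases "lo \<le> x \<and> x < n")
  case True
  define A where "A e = {es. length es = k \<and> set es \<subseteq> {-1, 1} \<and> passes_up lo n (x + e) es}"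
    for e :: int
  have fin: "finite (A e)" for e
    unfolding A_def by (rule finite_sign_lists)
  have "passage_prob_len q lo n (Suc k) x d = (\<Sum>es\<in>Cons 1 ` A 1 \<union> Cons (-1) ` A (-1). path_prob q x d es)"
    unfolding passage_prob_len_def sign_lists_Suc A_def using True by simp
  also have "\<dots> = (\<Sum>es\<in>A 1. path_prob q x d (1 # es)) + (\<Sum>es\<in>A (-1). path_prob q x d ((-1) # es))"
    using fin by (subst sum.union_disjoint) (auto simp: sum.reindex)
  finally show ?thesis
    using True by (simp add: A_def passage_prob_len_def sum_distrib_left)
next
  case False
  then have no_paths: "{es. length es = Suc k \<and> set es \<subseteq> {-1, 1} \<and> passes_up lo n x es} = {}"
    by (auto simp: length_Suc_conv)
  show ?thesis
    using False unfolding passage_prob_len_def no_paths by auto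
qed

lemma step_prob_up_plus_down:
  "d \<in> {-1, 1} \<Longrightarrow> step_prob q x d 1 + step_prob q x d (-1) = 1"
  by (auto simp: step_prob_def)

context
  fixes q :: "int \<Rightarrow> real"
  assumes q_nonneg: "\<And>x. 0 \<le> q x" and q_le_1: "\<And>x. q x \<le> 1"
begin

lemma step_prob_nonneg: "0 \<le> step_prob q x d e"
  using q_nonneg q_le_1 by (simp add: step_prob_def)

lemma path_prob_nonneg: "0 \<le> path_prob q x d es"
  by (induction es arbitrary: x d) (simp_all add: step_prob_nonneg)

lemma passage_prob_len_nonneg: "0 \<le> passage_prob_len q lo n k x d"
  unfolding passage_prob_len_def by (simp add: sum_nonneg path_prob_nonneg)

lemma passage_prob_len_partial_sum_le_1:
  "d \<in> {-1, 1} \<Longrightarrow> (\<Sum>k<K. passage_prob_len q lo n k x d) \<le> 1"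
proof (induction K arbitrary: x d)
  case 0
  then show ?case by simp
next
  case (Suc K)
  define S where "S y e = (\<Sum>k<K. passage_prob_len q lo n k y e)" for y e
  have "(\<Sum>k<Suc K. passage_prob_len q lo n k x d) =
        (if x = n then 1 else 0) + (if lo \<le> x \<and> x < n then
          step_prob q x d 1 * S (x + 1) 1 + step_prob q x d (-1) * S (x - 1) (-1) else 0)"
    unfolding S_def sum.lessThan_Suc_shift passage_prob_len_0 passage_prob_len_Suc
    by (auto simp: sum.distrib sum_distrib_left)
  also have "\<dots> \<le> 1"
  proof -
    have weighted: "step_prob q x d e * S y e' \<le> step_prob q x d e" if "e' \<in> {-1, 1}" for e y e'
      using mult_left_le[OF Suc.IH[OF that] step_prob_nonneg] unfolding S_def .
    show ?thesis
      using step_prob_up_plus_down[OF Suc.prems, of q x]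
        add_mono[OF weighted[where e = 1 and e' = 1] weighted[where e = "-1" and e' = "-1"]] by auto
  qed
  finally show ?case .
qed

lemma summable_passage_prob_len: "d \<in> {-1, 1} \<Longrightarrow> summable (\<lambda>k. passage_prob_len q lo n k x d)"
  by (rule summableI_nonneg_bounded[where x = 1])
    (simp_all add: passage_prob_len_nonneg passage_prob_len_partial_sum_le_1)

lemma passage_prob_eq:
  "passage_prob q lo n x d =
     (if x = n then 1 else 0) + (if lo \<le> x \<and> x < n then
        step_prob q x d 1 * passage_prob q lo n (x + 1) 1
      + step_prob q x d (-1) * passage_prob q lo n (x - 1) (-1)
      else 0)"
proof -
  have "(\<lambda>k. passage_prob_len q lo n (Suc k) x d) sums
     (if lo \<le> x \<and> x < n then
        step_prob q x d 1 * passage_prob q lo n (x + 1) 1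
      + step_prob q x d (-1) * passage_prob q lo n (x - 1) (-1)
      else 0)"
    unfolding passage_prob_len_Suc passage_prob_def
    by (auto intro!: sums_add sums_mult summable_passage_prob_len)
  from sums_unique[OF this[unfolded sums_Suc_iff[where f = "\<lambda>k. passage_prob_len q lo n k x d"]]]
  show ?thesis
    unfolding passage_prob_len_0 passage_prob_def by simp
qed

end

lemma persistent_recurrence_solution:
  fixes q U D :: "int \<Rightarrow> real"
  assumes q_pos: "\<And>x. 0 < q x" and "lo < n"
    and U_rec: "\<And>x. lo \<le> x \<Longrightarrow> x < n \<Longrightarrow> U x = q x * U (x + 1) + (1 - q x) * D (x - 1)"
    and D_rec: "\<And>x. lo \<le> x \<Longrightarrow> x < n \<Longrightarrow> D x = (1 - q x) * U (x + 1) + q x * D (x - 1)"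
    and U_top: "U n = 1" and D_bottom: "D (lo - 1) = 0"
  shows "U (lo + 1) = 1 / (q lo * (1 + (\<Sum>x\<in>{lo..<n}. (1 - q x) / q x)))"
proof -
  define w where "w x = (1 - q x) / q x" for x
  \<comment> \<open>the flux \<open>U (x + 1) - D x\<close> at \<open>x = lo - 1\<close>\<close>
  define C where "C = U lo"
  have flux_step: "U (x + 1) - D x = U x - D (x - 1)" if "lo \<le> x" "x < n" for x
    using U_rec[OF that] D_rec[OF that] by (simp add: algebra_simps)
  have flux: "U (x + 1) - D x = C" if "lo - 1 \<le> x" "x < n" for x
    using that
  proof (induction x rule: int_ge_induct)
    case base
    then show ?case by (simp add: C_def D_bottom)
  next
    case (step x)
    then show ?case using flux_step[of "x + 1"] by simp
  qed
  have D_step: "D x - D (x - 1) = C * w x" if "lo \<le> x" "x < n" for x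
  proof -
    have "D x - D (x - 1) = (1 - q x) * (C + (D x - D (x - 1)))"
      using D_rec[OF that] flux[of x] that by (simp add: algebra_simps)
    then have "q x * (D x - D (x - 1)) = (1 - q x) * C"
      by (simp add: algebra_simps)
    then show ?thesis
      using q_pos[of x] by (simp add: w_def field_simps)
  qed
  have D_sum: "D x = C * (\<Sum>y\<in>{lo..<x + 1}. w y)" if "lo - 1 \<le> x" "x < n" for x
    using that
  proof (induction x rule: int_ge_induct)
    case base
    then show ?case by (simp add: D_bottom)
  next
    case (step x)
    have "{lo..<x + 1 + 1} = insert (x + 1) {lo..<x + 1}"
      using step.hyps by auto
    then show ?case
      using step D_step[of "x + 1"] by (simp add: algebra_simps)
  qed
  define W where "W = (\<Sum>x\<in>{lo..<n}. w x)"
  have "1 - C * W = C"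
    using flux[of "n - 1"] D_sum[of "n - 1"] \<open>lo < n\<close> by (simp add: U_top W_def)
  then have "C * (1 + W) = 1"
    by (simp add: algebra_simps)
  then have C: "C = 1 / (1 + W)"
    by (auto simp: eq_divide_eq)
  have "U (lo + 1) = C * (1 + w lo)"
    using flux[of lo] D_step[of lo] \<open>lo < n\<close> by (simp add: D_bottom algebra_simps)
  also have "1 + w lo = 1 / q lo"
    using q_pos[of lo] by (simp add: w_def field_simps)
  finally show ?thesis
    by (simp add: C W_def w_def)
qed

lemma passage_prob_from_bottom:
  fixes q :: "int \<Rightarrow> real"
  assumes q_pos: "\<And>x. 0 < q x" and q_le_1: "\<And>x. q x \<le> 1" and "lo < n"
  shows "passage_prob q lo n (lo + 1) 1 = 1 / (q lo * (1 + (\<Sum>x\<in>{lo..<n}. (1 - q x) / q x)))"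
proof -
  note rec = passage_prob_eq[of q, OF less_imp_le[OF q_pos] q_le_1]
  show ?thesis
  proof (rule persistent_recurrence_solution[where D = "\<lambda>x. passage_prob q lo n x (-1)"])
    fix x
    assume "lo \<le> x" "x < n"
    then show "passage_prob q lo n x 1 =
        q x * passage_prob q lo n (x + 1) 1 + (1 - q x) * passage_prob q lo n (x - 1) (-1)"
      and "passage_prob q lo n x (-1) =
        (1 - q x) * passage_prob q lo n (x + 1) 1 + q x * passage_prob q lo n (x - 1) (-1)"
      using rec[of lo n x] by (simp_all add: step_prob_def)
  qed (use assms rec[of lo n] in auto)
qed

lemma passes_up_from_below: "x < lo \<Longrightarrow> x \<noteq> n \<Longrightarrow> \<not> passes_up lo n x es"
  by (cases es) auto

lemma unit_steps_stay_below:
  fixes X :: "nat \<Rightarrow> int"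
  assumes steps: "\<forall>i<k. \<bar>X (i + 1) - X i\<bar> \<le> 1" and "X 0 < n"
    and avoids: "\<forall>i\<in>{1..<k}. X i \<noteq> n" and "j < k"
  shows "X j < n"
proof (rule ccontr)
  assume "\<not> X j < n"
  then obtain i where "i \<le> j" "X i = n"
    using nat0_intermed_int_val[of j X n] steps \<open>j < k\<close> \<open>X 0 < n\<close> by auto
  moreover have "i \<noteq> 0"
    using \<open>X i = n\<close> \<open>X 0 < n\<close> by (metis less_irrefl)
  ultimately show False
    using avoids \<open>j < k\<close> by auto
qed

section \<open>The two-strata persistent gambler's ruin\<close>

definition pgr_persist :: "real \<Rightarrow> real \<Rightarrow> int \<Rightarrow> int \<Rightarrow> real" where
  "pgr_persist a b f x = pgr_a a b f \<bar>x\<bar>"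

lemma pgr_pos_0 [simp]: "pgr_pos m es 0 = m"
  by (simp add: pgr_pos_def)

lemma pgr_pos_Cons_Suc [simp]: "pgr_pos m (e # es) (Suc j) = pgr_pos (m + e) es j"
  by (simp add: pgr_pos_def)

lemma pgr_pos_Suc: "j < length es \<Longrightarrow> pgr_pos m es (Suc j) = pgr_pos m es j + es ! j"
  by (simp add: pgr_pos_def take_Suc_conv_app_nth)

lemma pgr_pos_reflect: "pgr_pos (-m) (map uminus es) j = - pgr_pos m es j"
proof -
  have "sum_list (map uminus xs) = - sum_list xs" for xs :: "int list"
    by (induction xs) auto
  then show ?thesis
    by (simp add: pgr_pos_def take_map)
qed

lemma prod_step_prob_eq_path_prob:
  "(\<Prod>j<length es. step_prob q (pgr_pos x es j) ((e # es) ! j) (es ! j)) = path_prob q x e es"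
  by (induction es arbitrary: x e) (simp_all add: prod.lessThan_Suc_shift del: prod.lessThan_Suc)

lemma pgr_path_prob_Cons:
  "pgr_path_prob a b f m (e # es) = 1 / 2 * path_prob (pgr_persist a b f) (m + e) e es"
proof -
  have "{1..<length (e # es)} = Suc ` {..<length es}"
    by (simp add: image_Suc_lessThan atLeastLessThanSuc_atLeastAtMost)
  then show ?thesis
    unfolding pgr_path_prob_def prod_step_prob_eq_path_prob[symmetric] step_prob_def pgr_persist_def Let_def
    by (simp add: prod.reindex cong: if_cong)
qed

lemma pgr_path_prob_reflect: "pgr_path_prob a b f (-m) (map uminus es) = pgr_path_prob a b f m es"
  unfolding pgr_path_prob_def pgr_pos_reflect by (auto simp: Let_def intro!: prod.cong)

lemma pgr_event_reflect:
  "m \<noteq> n \<Longrightarrow> pgr_event N (-m) (-n) (map uminus es) = pgr_event N m n es"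
  unfolding pgr_event_def pgr_pos_reflect Let_def by auto

lemma pgr_rho_reflect:
  assumes "m \<noteq> n"
  shows "pgr_rho a b f N (-m) (-n) = pgr_rho a b f N m n"
proof -
  define E where "E k = {es. length es = k \<and> set es \<subseteq> {-1, 1} \<and> pgr_event N m n es}" for k
  have reflect_image: "es \<in> map uminus ` A \<longleftrightarrow> map uminus es \<in> A" for es :: "int list" and A
    by (force simp: image_iff)
  have signs: "set (map uminus es) \<subseteq> {-1, 1} \<longleftrightarrow> set es \<subseteq> {-1, 1}" for es :: "int list"
    by auto
  have "es \<in> {es. length es = k \<and> set es \<subseteq> {-1, 1} \<and> pgr_event N (-m) (-n) es} \<longleftrightarrow>
      es \<in> map uminus ` E k" for es k
    unfolding reflect_image E_def
    using pgr_event_reflect[OF assms, where es = "map uminus es"] signs by simp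
  then have "{es. length es = k \<and> set es \<subseteq> {-1, 1} \<and> pgr_event N (-m) (-n) es} = map uminus ` E k" for k
    by blast
  moreover have "inj_on (map uminus) A" for A :: "int list set"
    by (rule inj_on_subset[of _ UNIV]) simp_all
  ultimately show ?thesis
    unfolding pgr_rho_def by (simp add: sum.reindex E_def pgr_path_prob_reflect)
qed

lemma passes_up_iff_pgr_pos:
  "passes_up lo n x es \<longleftrightarrow>
     pgr_pos x es (length es) = n \<and> (\<forall>j<length es. lo \<le> pgr_pos x es j \<and> pgr_pos x es j < n)"
  by (induction es arbitrary: x) (auto simp: All_less_Suc2)

lemma pgr_pos_step_le_1:
  assumes "set es \<subseteq> {-1, 1}" "j < length es"
  shows "\<bar>pgr_pos m es (Suc j) - pgr_pos m es j\<bar> \<le> 1"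
proof -
  have "es ! j \<in> {-1, 1}"
    using assms nth_mem by blast
  then show ?thesis
    using assms(2) by (auto simp: pgr_pos_Suc)
qed

lemma pgr_event_up_iff:
  assumes "-N < m" "m < n" "n < N" and signs: "set es \<subseteq> {-1, 1}"
  shows "pgr_event N m n es \<longleftrightarrow> es \<noteq> [] \<and> passes_up m n m es"
proof -
  define X where "X = pgr_pos m es"
  define k where "k = length es"
  have steps: "\<bar>X (j + 1) - X j\<bar> \<le> 1" if "j < k" for j
    using pgr_pos_step_le_1[OF signs] that unfolding X_def k_def by simp
  have event: "pgr_event N m n es \<longleftrightarrow> 1 \<le> k \<and> (X k = n \<or> \<bar>X k\<bar> = N) \<and>
      (\<forall>j\<in>{1..<k}. X j \<noteq> n \<and> \<bar>X j\<bar> < N) \<and> (\<forall>j\<le>k. m \<le> X j)"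
    unfolding pgr_event_def X_def k_def Let_def using \<open>m < n\<close> by simp
  have passes: "es \<noteq> [] \<and> passes_up m n m es \<longleftrightarrow> 1 \<le> k \<and> X k = n \<and> (\<forall>j<k. m \<le> X j \<and> X j < n)"
    unfolding passes_up_iff_pgr_pos X_def k_def by (cases es) auto
  show ?thesis
  proof
    assume "pgr_event N m n es"
    then have "1 \<le> k" and final: "X k = n \<or> \<bar>X k\<bar> = N"
      and inner: "\<forall>j\<in>{1..<k}. X j \<noteq> n" and above: "\<forall>j\<le>k. m \<le> X j"
      using event by auto
    have below: "X j < n" if "j < k" for j
      using unit_steps_stay_below[of k X n j] steps inner that \<open>m < n\<close> by (simp add: X_def)
    \<comment> \<open>the walk cannot leave through \<open>\<bar>X\<bar> = N\<close>: it stays above \<open>m > -N\<close> and is at most \<open>n < N\<close>\<close>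
    have "X k \<le> n"
      using below[of "k - 1"] steps[of "k - 1"] \<open>1 \<le> k\<close> by simp
    then have "X k = n"
      using final above \<open>-N < m\<close> \<open>n < N\<close> by fastforce
    then show "es \<noteq> [] \<and> passes_up m n m es"
      using passes \<open>1 \<le> k\<close> below above by auto
  next
    assume "es \<noteq> [] \<and> passes_up m n m es"
    then have "1 \<le> k" "X k = n" and inside: "\<forall>j<k. m \<le> X j \<and> X j < n"
      using passes by auto
    moreover have "\<forall>j\<le>k. m \<le> X j"
      using inside \<open>X k = n\<close> \<open>m < n\<close> by (metis le_less less_imp_le)
    ultimately show "pgr_event N m n es"
      unfolding event using assms by fastforce
  qed
qed

lemma pgr_persist_bounds:
  "0 < a \<Longrightarrow> a \<le> 1 \<Longrightarrow> 0 < b \<Longrightarrow> b \<le> 1 \<Longrightarrow> 0 < pgr_persist a b f x \<and> pgr_persist a b f x \<le> 1"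
  by (simp add: pgr_persist_def pgr_a_def)

lemma pgr_rho_up:
  assumes ab: "0 < a" "a \<le> 1" "0 < b" "b \<le> 1" and mn: "-N < m" "m < n" "n < N"
  shows "pgr_rho a b f N m n =
    1 / (2 * (pgr_persist a b f m * (1 + (\<Sum>x\<in>{m..<n}. (1 - pgr_persist a b f x) / pgr_persist a b f x))))"
proof -
  define q where "q = pgr_persist a b f"
  have q_pos: "0 < q x" and q_le_1: "q x \<le> 1" for x
    using pgr_persist_bounds[OF ab] by (simp_all add: q_def)
  define T where "T k = (\<Sum>es\<in>{es. length es = k \<and> set es \<subseteq> {-1, 1} \<and> pgr_event N m n es}.
      pgr_path_prob a b f m es)" for k
  have events: "{es. length es = k \<and> set es \<subseteq> {-1, 1} \<and> pgr_event N m n es} =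
        {es. length es = k \<and> set es \<subseteq> {-1, 1} \<and> es \<noteq> [] \<and> passes_up m n m es}" for k
    using pgr_event_up_iff[OF mn] by blast
  have first_step_up: "{es. length es = Suc k \<and> set es \<subseteq> {-1, 1} \<and> pgr_event N m n es} =
        Cons 1 ` {es. length es = k \<and> set es \<subseteq> {-1, 1} \<and> passes_up m n (m + 1) es}" for k
    unfolding events sign_lists_Suc using \<open>m < n\<close> by (simp add: passes_up_from_below)
  have T_Suc: "T (Suc k) = 1 / 2 * passage_prob_len q m n k (m + 1) 1" for k
    unfolding T_def first_step_up passage_prob_len_def
    by (simp add: sum.reindex pgr_path_prob_Cons sum_distrib_left q_def)
  have "(\<lambda>k. T (Suc k)) sums (1 / 2 * passage_prob q m n (m + 1) 1)"
    unfolding T_Suc passage_prob_def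
    by (intro sums_mult summable_sums summable_passage_prob_len) (simp_all add: less_imp_le q_pos q_le_1)
  moreover have "T 0 = 0"
    unfolding T_def events by (simp add: Collect_conv_if)
  ultimately have "T sums (1 / 2 * passage_prob q m n (m + 1) 1)"
    by (simp add: sums_Suc_iff[where f = T])
  then show ?thesis
    unfolding pgr_rho_def T_def[symmetric] passage_prob_from_bottom[OF q_pos q_le_1 \<open>m < n\<close>]
    by (simp add: sums_iff q_def)
qed

lemma pgr_rho_down:
  assumes ab: "0 < a" "a \<le> 1" "0 < b" "b \<le> 1" and nm: "-N < n" "n < m" "m < N"
  shows "pgr_rho a b f N m n =
    1 / (2 * (pgr_persist a b f m * (1 + (\<Sum>x\<in>{n + 1..<m + 1}. (1 - pgr_persist a b f x) / pgr_persist a b f x))))"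
proof -
  have "pgr_rho a b f N m n = pgr_rho a b f N (-m) (-n)"
    using nm by (simp add: pgr_rho_reflect)
  also have "\<dots> = 1 / (2 * (pgr_persist a b f (-m) *
      (1 + (\<Sum>x\<in>{-m..<-n}. (1 - pgr_persist a b f x) / pgr_persist a b f x))))"
    using nm by (intro pgr_rho_up ab) auto
  also have "(\<Sum>x\<in>{-m..<-n}. (1 - pgr_persist a b f x) / pgr_persist a b f x) =
      (\<Sum>x\<in>{n + 1..<m + 1}. (1 - pgr_persist a b f x) / pgr_persist a b f x)"
    by (rule sum.reindex_bij_witness[of _ uminus uminus]) (auto simp: pgr_persist_def)
  finally show ?thesis
    by (simp add: pgr_persist_def)
qed

lemma pgr_weight_sum:
  assumes "0 \<le> u" "u \<le> v"
  shows "(\<Sum>x\<in>{u..<v}. (1 - pgr_persist a b f x) / pgr_persist a b f x) =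
    of_int (min v f - min u f) * ((1 - a) / a) + of_int (max v f - max u f) * ((1 - b) / b)"
proof -
  have "(\<Sum>x\<in>{u..<v}. (1 - pgr_persist a b f x) / pgr_persist a b f x) =
      (\<Sum>x\<in>{u..<v}. if x < f then (1 - a) / a else (1 - b) / b)"
    using assms by (intro sum.cong) (auto simp: pgr_persist_def pgr_a_def)
  also have "\<dots> = (\<Sum>x\<in>{u..<min v f}. (1 - a) / a) + (\<Sum>x\<in>{max u f..<v}. (1 - b) / b)"
  proof -
    have "{u..<v} \<inter> {x. x < f} = {u..<min v f}" "{u..<v} \<inter> - {x. x < f} = {max u f..<v}"
      by auto
    then show ?thesis
      by (simp add: sum.If_cases)
  qed
  also have "\<dots> = of_int (min v f - min u f) * ((1 - a) / a) + of_int (max v f - max u f) * ((1 - b) / b)"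
    using assms by (simp add: min_def max_def)
  finally show ?thesis .
qed

lemma pgr_rho_across_up:
  assumes "0 < a" "a \<le> 1" "0 < b" "b \<le> 1" "1 \<le> l" "0 \<le> j" "0 \<le> f - l" "f + j < N"
  shows "pgr_rho a b f N (f - l) (f + j) =
    (b / (2 * a)) / (of_int j + of_int l * (b / a) - of_int (l + j - 1) * b)"
proof -
  have "pgr_rho a b f N (f - l) (f + j) =
      1 / (2 * (a * (1 + (of_int l * ((1 - a) / a) + of_int j * ((1 - b) / b)))))"
    using pgr_rho_up[of a b N "f - l" "f + j" f] pgr_weight_sum[of "f - l" "f + j" a b f] assms
    by (simp add: pgr_persist_def pgr_a_def)
  also have "a * (1 + (of_int l * ((1 - a) / a) + of_int j * ((1 - b) / b))) =
      a / b * (of_int j + of_int l * (b / a) - of_int (l + j - 1) * b)"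
    using assms by (simp add: field_simps)
  finally show ?thesis
    by simp
qed

lemma pgr_rho_across_down:
  assumes "0 < a" "a \<le> 1" "0 < b" "b \<le> 1" "1 \<le> l" "0 \<le> j" "0 \<le> f - l" "f + j < N"
  shows "pgr_rho a b f N (f + j) (f - l) =
    (1 / 2) / (of_int (j + 1) + of_int (l - 1) * (b / a) - of_int (l + j - 1) * b)"
proof -
  have "pgr_rho a b f N (f + j) (f - l) =
      1 / (2 * (b * (1 + (of_int (l - 1) * ((1 - a) / a) + of_int (j + 1) * ((1 - b) / b)))))"
    using pgr_rho_down[of a b N "f - l" "f + j" f] pgr_weight_sum[of "f - l + 1" "f + j + 1" a b f] assms
    by (simp add: pgr_persist_def pgr_a_def)
  also have "b * (1 + (of_int (l - 1) * ((1 - a) / a) + of_int (j + 1) * ((1 - b) / b))) =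
      of_int (j + 1) + of_int (l - 1) * (b / a) - of_int (l + j - 1) * b"
    using assms by (simp add: field_simps)
  finally show ?thesis
    by simp
qed

lemma pgr_rho_within_stratum:
  assumes ab: "0 < a" "a \<le> 1" "0 < b" "b \<le> 1" and mn: "0 \<le> m" "0 \<le> n" "m \<noteq> n" "m < N" "n < N"
    and persist: "\<And>x. min m n \<le> x \<Longrightarrow> x \<le> max m n \<Longrightarrow> pgr_persist a b f x = c"
  shows "pgr_rho a b f N m n = 1 / (2 * (of_int \<bar>n - m\<bar> - of_int (\<bar>n - m\<bar> - 1) * c))"
proof -
  have "0 < c"
    using persist[of m] pgr_persist_bounds[OF ab, of f m] by simp
  have const_sum: "(\<Sum>x\<in>{u..<v}. (1 - pgr_persist a b f x) / pgr_persist a b f x) = of_int (v - u) * ((1 - c) / c)"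
    if "min m n \<le> u" "u \<le> v" "v \<le> max m n + 1" for u v
  proof -
    have "(\<Sum>x\<in>{u..<v}. (1 - pgr_persist a b f x) / pgr_persist a b f x) = (\<Sum>x\<in>{u..<v}. (1 - c) / c)"
      using that by (intro sum.cong) (simp_all add: persist)
    then show ?thesis
      using that by simp
  qed
  have closed_form: "c * (1 + of_int k * ((1 - c) / c)) = of_int k - of_int (k - 1) * c" for k
    using \<open>0 < c\<close> by (simp add: field_simps)
  show ?thesis
  proof (cases "m < n")
    case True
    then show ?thesis
      using pgr_rho_up[OF ab, of N m n f] const_sum[of m n] persist[of m] closed_form[of "n - m"] mn
      by simp
  next
    case False
    then show ?thesis
      using pgr_rho_down[OF ab, of N n m f] const_sum[of "n + 1" "m + 1"] persist[of m] closed_form[of "m - n"] mn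
      by simp
  qed
qed

theorem proposition1:
  fixes a b :: real and f N :: int
  assumes "0 < a" "a < 1" "0 < b" "b < 1" "1 \<le> f" "f < N"
  shows
   "(\<forall>l j :: int. 1 \<le> l \<longrightarrow> 0 \<le> j \<longrightarrow> 0 \<le> f - l \<longrightarrow> f + j < N \<longrightarrow>
       pgr_rho a b f N (f - l) (f + j) =
         (b / (2 * a)) / (of_int j + of_int l * (b / a) - of_int (l + j - 1) * b))
  \<and> (\<forall>l j :: int. 1 \<le> l \<longrightarrow> 0 \<le> j \<longrightarrow> 0 \<le> f - l \<longrightarrow> f + j < N \<longrightarrow>
       pgr_rho a b f N (f + j) (f - l) =
         (1 / 2) / (of_int (j + 1) + of_int (l - 1) * (b / a) - of_int (l + j - 1) * b))
  \<and> (\<forall>m l :: int. 0 \<le> m \<longrightarrow> m < m + l \<longrightarrow> m + l \<le> f - 1 \<longrightarrow>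
       pgr_rho a b f N m (m + l) = 1 / (2 * (of_int l - of_int (l - 1) * a)) \<and>
       pgr_rho a b f N (m + l) m = 1 / (2 * (of_int l - of_int (l - 1) * a)))
  \<and> (\<forall>m j :: int. f \<le> m \<longrightarrow> m < m + j \<longrightarrow> m + j < N \<longrightarrow>
       pgr_rho a b f N m (m + j) = 1 / (2 * (of_int j - of_int (j - 1) * b)) \<and>
       pgr_rho a b f N (m + j) m = 1 / (2 * (of_int j - of_int (j - 1) * b)))"
proof -
  have ab: "0 < a" "a \<le> 1" "0 < b" "b \<le> 1"
    using assms by simp_all
  have lower_stratum: "pgr_rho a b f N m n = 1 / (2 * (of_int \<bar>n - m\<bar> - of_int (\<bar>n - m\<bar> - 1) * a))"
    if "0 \<le> m" "0 \<le> n" "m \<noteq> n" "m < f" "n < f" for m n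
    using that assms by (intro pgr_rho_within_stratum[OF ab]) (auto simp: pgr_persist_def pgr_a_def)
  have upper_stratum: "pgr_rho a b f N m n = 1 / (2 * (of_int \<bar>n - m\<bar> - of_int (\<bar>n - m\<bar> - 1) * b))"
    if "f \<le> m" "f \<le> n" "m \<noteq> n" "m < N" "n < N" for m n
    using that assms by (intro pgr_rho_within_stratum[OF ab]) (auto simp: pgr_persist_def pgr_a_def)
  show ?thesis
    using assms
    by (intro conjI allI impI)
      (simp_all add: pgr_rho_across_up[OF ab] pgr_rho_across_down[OF ab] lower_stratum upper_stratum)
qed

end
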